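(* Let $M$ be a Mealy machine and let $A$ be an NFA over $I_M$. Let $s,t\in S_M$ and $a,b\in S_A$, and suppose that $\mathcal{L}_A(b)\subseteq \mathcal{L}_A(a)$ and that $(s,a)\nsim (t,b)$. Then there exists a word $\alpha\in \mathcal{L}_A(b)$ such that $\alpha$ witnesses $(s,a)\nsim(t,b)$ (i.e. $\alpha\in\mathcal{L}_A(a)\cap\mathcal{L}_A(b)$ and $\lambda_M(s,\alpha)\neq\lambda_M(t,\alpha)$) and $|\alpha|\leq |S_M|\,|S_A|$.
   Context: A Mealy machine is $M=(I_M,O_M,S_M,\delta_M,\lambda_M,r_M)$ with finite input/output alphabets $I_M,O_M$, finite state set $S_M$, next-state function $\delta_M:S_M\times I_M\to S_M$, output function $\lambda_M:S_M\times I_M\to O_M$, initial state $r_M$; $\delta_M,\lambda_M$ are extended to words in the usual way ($\delta_M(s,\epsilon)=s$, $\lambda_M(s,\epsilon)=\epsilon$, $\delta_M(s,\alpha x)=\delta_M(\delta_M(s,\alpha),x)$, $\lambda_M(s,\alpha x)=\lambda_M(s,\alpha)\lambda_M(\delta_M(s,\alpha),x)$). An NFA over an alphabet $\varphi$ is $A=(\varphi,S_A,\Delta_A,r_A)$ with $\Delta_A:S_A\times\varphi\to 2^{S_A}$ extended to words; all states are accepting, so for $s\in S_A$ the language $\mathcal{L}_A(s)$ is the set of words $\alpha$ with $\Delta_A(s,\alpha)\neq\emptyset$ (a prefix-closed set containing $\epsilon$), and $\mathcal{L}_A=\mathcal{L}_A(r_A)$. For pairs (locations) $(s,a),(t,b)\in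 S_M\times S_A$: a word $\alpha$ witnesses $(s,a)\nsim(t,b)$ if $\alpha\in\mathcal{L}_A(a)\cap\mathcal{L}_A(b)$ and $\lambda_M(s,\alpha)\neq\lambda_M(t,\alpha)$; the pairs are incompatible, $(s,a)\nsim(t,b)$, if such a witness exists, and compatible, $(s,a)\sim(t,b)$, otherwise. *)

theory Defs
  imports Main
begin

(* Mealy machine M = (I, O, S, delta, lambda, r) with explicit finite carriers. *)
definition mealy ::
  "'i set \<Rightarrow> 'o set \<Rightarrow> 's set \<Rightarrow> ('s \<Rightarrow> 'i \<Rightarrow> 's) \<Rightarrow> ('s \<Rightarrow> 'i \<Rightarrow> 'o) \<Rightarrow> 's \<Rightarrow> bool" where
  "mealy I Out S \<tau> \<mu> r \<longleftrightarrow> finite I \<and> finite Out \<and> finite S \<and> r \<in> S \<and>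
     (\<forall>s\<in>S. \<forall>x\<in>I. \<tau> s x \<in> S \<and> \<mu> s x \<in> Out)"

primrec delta_word :: "('s \<Rightarrow> 'i \<Rightarrow> 's) \<Rightarrow> 's \<Rightarrow> 'i list \<Rightarrow> 's" where
  "delta_word \<tau> s [] = s"
| "delta_word \<tau> s (x # \<alpha>) = delta_word \<tau> (\<tau> s x) \<alpha>"

primrec lambda_word :: "('s \<Rightarrow> 'i \<Rightarrow> 's) \<Rightarrow> ('s \<Rightarrow> 'i \<Rightarrow> 'o) \<Rightarrow> 's \<Rightarrow> 'i list \<Rightarrow> 'o list" where
  "lambda_word \<tau> \<mu> s [] = []"
| "lambda_word \<tau> \<mu> s (x # \<alpha>) = \<mu> s x # lambda_word \<tau> \<mu> (\<tau> s x) \<alpha>"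

(* NFA A = (phi, S_A, Delta, r) with all states accepting *)
definition nfa :: "'i set \<Rightarrow> 'q set \<Rightarrow> ('q \<Rightarrow> 'i \<Rightarrow> 'q set) \<Rightarrow> 'q \<Rightarrow> bool" where
  "nfa \<phi> S Tr r \<longleftrightarrow> finite \<phi> \<and> finite S \<and> r \<in> S \<and> (\<forall>a\<in>S. \<forall>x\<in>\<phi>. Tr a x \<subseteq> S)"

primrec Delta_word :: "('q \<Rightarrow> 'i \<Rightarrow> 'q set) \<Rightarrow> 'q \<Rightarrow> 'i list \<Rightarrow> 'q set" where
  "Delta_word Tr a [] = {a}"
| "Delta_word Tr a (x # \<alpha>) = (\<Union>q\<in>Tr a x. Delta_word Tr q \<alpha>)"

definition lang :: "'i set \<Rightarrow> ('q \<Rightarrow> 'i \<Rightarrow> 'q set) \<Rightarrow> 'q \<Rightarrow> 'i list set" where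
  "lang \<phi> Tr a = {\<alpha>. set \<alpha> \<subseteq> \<phi> \<and> Delta_word Tr a \<alpha> \<noteq> {}}"

definition witnesses ::
  "'i set \<Rightarrow> ('s \<Rightarrow> 'i \<Rightarrow> 's) \<Rightarrow> ('s \<Rightarrow> 'i \<Rightarrow> 'o) \<Rightarrow> ('q \<Rightarrow> 'i \<Rightarrow> 'q set) \<Rightarrow>
   'i list \<Rightarrow> 's \<times> 'q \<Rightarrow> 's \<times> 'q \<Rightarrow> bool" where
  "witnesses \<phi> \<tau> \<mu> Tr \<alpha> p p' \<longleftrightarrow>
     \<alpha> \<in> lang \<phi> Tr (snd p) \<inter> lang \<phi> Tr (snd p') \<and>
     lambda_word \<tau> \<mu> (fst p) \<alpha> \<noteq> lambda_word \<tau> \<mu> (fst p') \<alpha>"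

definition incompatible ::
  "'i set \<Rightarrow> ('s \<Rightarrow> 'i \<Rightarrow> 's) \<Rightarrow> ('s \<Rightarrow> 'i \<Rightarrow> 'o) \<Rightarrow> ('q \<Rightarrow> 'i \<Rightarrow> 'q set) \<Rightarrow>
   's \<times> 'q \<Rightarrow> 's \<times> 'q \<Rightarrow> bool" where
  "incompatible \<phi> \<tau> \<mu> Tr p p' \<longleftrightarrow> (\<exists>\<alpha>. witnesses \<phi> \<tau> \<mu> Tr \<alpha> p p')"

end

theory Submission
  imports Defs
begin

text \<open>Call states s, t k-indistinguishable from an NFA state q if no word of length at
  most k in the language of q separates their outputs. For each q this is an equivalence
  relation on the Mealy states, and it refines as k grows. Once the relations stop changing
  from k to k + 1 simultaneously for all NFA states, the one-step characterisation of
  (k + 1)-indistinguishability shows they never change again. Until then the total number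
  of classes, summed over the NFA states, strictly increases, and it is bounded by
  |S_M| |S_A|; so stabilisation happens at some k \<le> |S_M| |S_A|, and any separating word can
  be replaced by one of length at most k. Since L(b) \<subseteq> L(a), a separating word in L(b)
  witnesses the incompatibility.\<close>

lemma card_quotient_le:
  assumes "finite A" shows "card (A // r) \<le> card A"
  unfolding proj_image[symmetric] using assms by (rule card_image_le)

lemma finite_refines_card_less:
  assumes "finite A" "R \<subset> S" "equiv A R" "equiv A S"
  shows "card (A // S) < card (A // R)"
proof -
  obtain x y where xy: "(x, y) \<in> S" "(x, y) \<notin> R" using assms(2) by auto
  then have x: "x \<in> A" and y: "y \<in> A" using assms(4) by (auto dest: equiv_type)
  have "R `` {x} \<noteq> R `` {y}" using xy(2) assms(3) x y by (simp add: eq_equiv_class_iff)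
  moreover have "S `` (R `` {x}) = S `` (R `` {y})"
    using refines_equiv_class_eq2[OF _ assms(3,4)] assms(2) xy(1) assms(4)
    by (simp add: equiv_class_eq_iff)
  moreover have "R `` {x} \<in> A // R" "R `` {y} \<in> A // R" using x y by (auto intro: quotientI)
  ultimately have "\<not> inj_on (\<lambda>X. S `` X) (A // R)" unfolding inj_on_def by blast
  moreover have "finite (A // R)" using assms(1,3) by (simp add: equiv_type finite_quotient)
  ultimately have "card ((\<lambda>X. S `` X) ` (A // R)) < card (A // R)"
    by (meson card_image_le eq_card_imp_inj_on le_neq_implies_less)
  then show ?thesis using refines_equiv_image_eq[OF _ assms(3,4)] assms(2) by auto
qed

lemma bounded_nat_seq_stalls:
  fixes f :: "nat \<Rightarrow> nat"
  assumes "f (Suc B) \<le> B"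
  shows "\<exists>k\<le>B. f (Suc k) \<le> f k"
proof (rule ccontr)
  assume stalls_never: "\<not> ?thesis"
  have "k \<le> Suc B \<Longrightarrow> k \<le> f k" for k
  proof (induction k)
    case (Suc k)
    then have "f k < f (Suc k)" using stalls_never by (auto simp: not_le dest: leD)
    with Suc show ?case by simp
  qed simp
  with assms show False by fastforce
qed

lemma Cons_in_lang_iff:
  "x # \<beta> \<in> lang I Tr q \<longleftrightarrow> x \<in> I \<and> (\<exists>q'\<in>Tr q x. \<beta> \<in> lang I Tr q')"
  by (auto simp: lang_def)

context
  fixes I :: "'i set" and \<tau> :: "'s \<Rightarrow> 'i \<Rightarrow> 's" and \<mu> :: "'s \<Rightarrow> 'i \<Rightarrow> 'o"
    and Tr :: "'q \<Rightarrow> 'i \<Rightarrow> 'q set"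
begin

definition indist :: "nat \<Rightarrow> 'q \<Rightarrow> 's \<Rightarrow> 's \<Rightarrow> bool" where
  "indist k q s t \<longleftrightarrow>
     (\<forall>\<alpha>\<in>lang I Tr q. length \<alpha> \<le> k \<longrightarrow> lambda_word \<tau> \<mu> s \<alpha> = lambda_word \<tau> \<mu> t \<alpha>)"

lemma indist_antimono: "k \<le> n \<Longrightarrow> indist n q s t \<Longrightarrow> indist k q s t"
  unfolding indist_def by auto

lemma indist_Suc_iff:
  "indist (Suc k) q s t \<longleftrightarrow>
     (\<forall>x\<in>I. \<forall>q'\<in>Tr q x. \<mu> s x = \<mu> t x \<and> indist k q' (\<tau> s x) (\<tau> t x))"
proof
  assume indist_Suc: "indist (Suc k) q s t"
  show "\<forall>x\<in>I. \<forall>q'\<in>Tr q x. \<mu> s x = \<mu> t x \<and> indist k q' (\<tau> s x) (\<tau> t x)"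
  proof (intro ballI conjI)
    fix x q' assume "x \<in> I" "q' \<in> Tr q x"
    then have extend: "\<beta> \<in> lang I Tr q' \<Longrightarrow> x # \<beta> \<in> lang I Tr q" for \<beta>
      by (auto simp: Cons_in_lang_iff)
    have "[] \<in> lang I Tr q'" by (simp add: lang_def)
    from indist_Suc extend[OF this] show "\<mu> s x = \<mu> t x" by (auto simp: indist_def)
    from indist_Suc extend show "indist k q' (\<tau> s x) (\<tau> t x)"
      unfolding indist_def by fastforce
  qed
next
  assume step: "\<forall>x\<in>I. \<forall>q'\<in>Tr q x. \<mu> s x = \<mu> t x \<and> indist k q' (\<tau> s x) (\<tau> t x)"
  show "indist (Suc k) q s t"
    unfolding indist_def
  proof (intro ballI impI)
    fix \<alpha> assume "\<alpha> \<in> lang I Tr q" "length \<alpha> \<le> Suc k"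
    then show "lambda_word \<tau> \<mu> s \<alpha> = lambda_word \<tau> \<mu> t \<alpha>"
      using step by (cases \<alpha>) (auto simp: Cons_in_lang_iff indist_def)
  qed
qed

definition indist_rel :: "'s set \<Rightarrow> nat \<Rightarrow> 'q \<Rightarrow> ('s \<times> 's) set" where
  "indist_rel S k q = {(s, t) \<in> S \<times> S. indist k q s t}"

lemma equiv_indist_rel: "equiv S (indist_rel S k q)"
  by (rule equivI) (auto simp: indist_rel_def indist_def refl_on_def sym_def trans_def)

definition indist_stable :: "'s set \<Rightarrow> 'q set \<Rightarrow> nat \<Rightarrow> bool" where
  "indist_stable S Q k \<longleftrightarrow>
     (\<forall>q\<in>Q. \<forall>s\<in>S. \<forall>t\<in>S. indist k q s t \<longrightarrow> indist (Suc k) q s t)"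

lemma indist_stable_Suc:
  assumes S_closed: "\<forall>s\<in>S. \<forall>x\<in>I. \<tau> s x \<in> S" and Q_closed: "\<forall>q\<in>Q. \<forall>x\<in>I. Tr q x \<subseteq> Q"
    and stable: "indist_stable S Q k"
  shows "indist_stable S Q (Suc k)"
  unfolding indist_stable_def
proof (intro ballI impI)
  fix q s t assume "q \<in> Q" "s \<in> S" "t \<in> S" "indist (Suc k) q s t"
  with S_closed Q_closed stable show "indist (Suc (Suc k)) q s t"
    unfolding indist_Suc_iff[of "Suc k"] indist_Suc_iff[of k] indist_stable_def by blast
qed

lemma indist_stable_imp_indist:
  assumes S_closed: "\<forall>s\<in>S. \<forall>x\<in>I. \<tau> s x \<in> S" and Q_closed: "\<forall>q\<in>Q. \<forall>x\<in>I. Tr q x \<subseteq> Q"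
    and stable: "indist_stable S Q k" and "q \<in> Q" "s \<in> S" "t \<in> S" "indist k q s t"
  shows "indist n q s t"
proof -
  have "indist_stable S Q (k + j)" for j
    by (induction j) (simp_all add: stable indist_stable_Suc[OF S_closed Q_closed])
  then have "indist (k + j) q s t" for j
    using assms(4-) by (induction j) (auto simp: indist_stable_def)
  then show ?thesis by (rule indist_antimono[of n "k + n", rotated]) simp
qed

definition num_indist_classes :: "'s set \<Rightarrow> 'q set \<Rightarrow> nat \<Rightarrow> nat" where
  "num_indist_classes S Q k = (\<Sum>q\<in>Q. card (S // indist_rel S k q))"

lemma num_indist_classes_le:
  "finite S \<Longrightarrow> num_indist_classes S Q k \<le> card S * card Q"
  unfolding num_indist_classes_def
  using sum_mono[of Q "\<lambda>q. card (S // indist_rel S k q)" "\<lambda>_. card S"]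
  by (simp add: card_quotient_le mult.commute)

lemma indist_rel_Suc_subset: "indist_rel S (Suc k) q \<subseteq> indist_rel S k q"
  unfolding indist_rel_def by (auto intro: indist_antimono[of k "Suc k"])

lemma indist_stable_if_num_classes_stall:
  assumes "finite S" "finite Q"
    and stall: "num_indist_classes S Q (Suc k) \<le> num_indist_classes S Q k"
  shows "indist_stable S Q k"
proof (rule ccontr)
  assume "\<not> indist_stable S Q k"
  then obtain q s t where "q \<in> Q" "s \<in> S" "t \<in> S" "indist k q s t" "\<not> indist (Suc k) q s t"
    unfolding indist_stable_def by blast
  then have "indist_rel S (Suc k) q \<subset> indist_rel S k q"
    using indist_rel_Suc_subset by (fastforce simp: indist_rel_def)
  then have "card (S // indist_rel S k q) < card (S // indist_rel S (Suc k) q)"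
    by (simp add: finite_refines_card_less[OF \<open>finite S\<close>] equiv_indist_rel)
  moreover have "card (S // indist_rel S k p) \<le> card (S // indist_rel S (Suc k) p)" for p
    using \<open>finite S\<close> equiv_indist_rel indist_rel_Suc_subset
    by (intro finite_refines_card_le) (auto simp: finite_quotient equiv_type)
  ultimately have "num_indist_classes S Q k < num_indist_classes S Q (Suc k)"
    unfolding num_indist_classes_def using \<open>finite Q\<close> \<open>q \<in> Q\<close>
    by (intro sum_strict_mono_ex1) auto
  with stall show False by simp
qed

end

theorem theorem1:
  fixes I :: "'i set" and Out :: "'o set" and SM :: "'s set"
    and \<tau> :: "'s \<Rightarrow> 'i \<Rightarrow> 's" and \<mu> :: "'s \<Rightarrow> 'i \<Rightarrow> 'o" and rM :: 's
    and SA :: "'q set" and Tr :: "'q \<Rightarrow> 'i \<Rightarrow> 'q set" and rA :: 'q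
    and s t :: 's and a b :: 'q
  assumes "mealy I Out SM \<tau> \<mu> rM"
    and "nfa I SA Tr rA"
    and "s \<in> SM" and "t \<in> SM" and "a \<in> SA" and "b \<in> SA"
    and "lang I Tr b \<subseteq> lang I Tr a"
    and "incompatible I \<tau> \<mu> Tr (s, a) (t, b)"
  shows "\<exists>\<alpha>\<in>lang I Tr b. witnesses I \<tau> \<mu> Tr \<alpha> (s, a) (t, b) \<and>
           length \<alpha> \<le> card SM * card SA"
proof -
  have fin: "finite SM" "finite SA" and S_closed: "\<forall>s\<in>SM. \<forall>x\<in>I. \<tau> s x \<in> SM"
    and Q_closed: "\<forall>q\<in>SA. \<forall>x\<in>I. Tr q x \<subseteq> SA"
    using assms(1,2) by (auto simp: mealy_def nfa_def)
  obtain K where K: "K \<le> card SM * card SA"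
    and stall: "num_indist_classes I \<tau> \<mu> Tr SM SA (Suc K) \<le> num_indist_classes I \<tau> \<mu> Tr SM SA K"
    using bounded_nat_seq_stalls[of "num_indist_classes I \<tau> \<mu> Tr SM SA"]
      num_indist_classes_le[OF fin(1)] by blast
  have stable: "indist_stable I \<tau> \<mu> Tr SM SA K"
    using fin stall by (rule indist_stable_if_num_classes_stall)
  obtain \<alpha> where "witnesses I \<tau> \<mu> Tr \<alpha> (s, a) (t, b)"
    using assms(8) unfolding incompatible_def by blast
  then have "\<not> indist I \<tau> \<mu> Tr (length \<alpha>) b s t"
    by (auto simp: witnesses_def indist_def)
  then have "\<not> indist I \<tau> \<mu> Tr K b s t"
    using indist_stable_imp_indist[OF S_closed Q_closed stable assms(6,3,4)] by blast
  then obtain \<beta> where "\<beta> \<in> lang I Tr b" "length \<beta> \<le> K"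
    "lambda_word \<tau> \<mu> s \<beta> \<noteq> lambda_word \<tau> \<mu> t \<beta>"
    unfolding indist_def by blast
  with assms(7) K show ?thesis
    by (intro bexI[of _ \<beta>]) (auto simp: witnesses_def)
qed

end
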